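(* Let $\Omega\subset\mathbb{R}^n$ be an open convex set and $u:\Omega\to\mathbb{R}$ a convex function with $\lambda\,dx\le\mu_u\le\frac1\lambda\,dx$ in $\Omega$ for some $\lambda>0$. Let $x\in\Omega$, $p\in\partial u(x)$, and $\ell(z):=u(x)+p\cdot(z-x)$. If the convex set $W:=\{z\in\Omega: u(z)=\ell(z)\}$ contains more than one point, then $W$ has no extremal points in $\Omega$.
   Context: For convex $u:\Omega\to\mathbb{R}$, $\partial u(x):=\{p: u(y)\ge u(x)+p\cdot(y-x)\ \forall y\in\Omega\}$ and $\mu_u(E):=|\bigcup_{x\in E}\partial u(x)|$ for Borel $E\subset\Omega$. Inequalities between measures are understood setwise on Borel sets. *)

theory Defs
  imports "HOL-Analysis.Analysis"
begin

definition subdiff :: "'a::euclidean_space set \<Rightarrow> ('a \<Rightarrow> real) \<Rightarrow> 'a \<Rightarrow> 'a set" where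
  "subdiff \<Omega> u x = {p. \<forall>y\<in>\<Omega>. u y \<ge> u x + p \<bullet> (y - x)}"

definition MA_measure :: "'a::euclidean_space set \<Rightarrow> ('a \<Rightarrow> real) \<Rightarrow> 'a set \<Rightarrow> ennreal" where
  "MA_measure \<Omega> u E = emeasure lebesgue (\<Union>x\<in>E. subdiff \<Omega> u x)"

end

theory Submission
  imports Defs
begin

text \<open>
  Suppose \<open>z0 \<in> \<Omega>\<close> is an extreme point of the contact set \<open>W\<close> and put \<open>g = u - \<ell> \<ge> 0\<close>, so
  that \<open>W = {g = 0}\<close>. Separating \<open>z0\<close> from a small sphere around it and using a second
  point of \<open>W\<close>, a hyperplane cuts off a cap of \<open>W\<close>: there are \<open>y, y' \<in> W\<close> and a direction
  \<open>e\<close> such that the points of \<open>W\<close> with \<open>e \<bullet> z \<ge> e \<bullet> y'\<close> stay in a small ball and below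
  the level \<open>e \<bullet> y\<close>. Subtracting a small multiple of \<open>e \<bullet> (z - y')\<close> from \<open>g\<close> gives a convex
  function \<open>w\<close> whose section \<open>Z = {w < 0}\<close> is bounded, contains the segment \<open>(y', y]\<close>, and
  exceeds the height of \<open>y\<close> in direction \<open>e\<close> only by an arbitrarily small \<open>\<gamma>\<close>.

  With \<open>Q\<close> the polar body of \<open>Z\<close> about the midpoint of \<open>[y', y]\<close> and \<open>a = -w y / 6\<close>, the
  thinness of \<open>Z\<close> in direction \<open>e\<close> lets \<open>N \<sim> 1/\<gamma>\<close> disjoint translates of \<open>a Q\<close> along \<open>e\<close> lie
  in \<open>\<partial>w(Z)\<close>, so the upper bound \<open>\<mu>\<^sub>w \<le> dx/\<lambda>\<close> gives \<open>N a\<^sup>n |Q| \<le> |Z|/\<lambda>\<close>. On the half-size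
  section the subgradients of \<open>w\<close> lie in \<open>2 (max |w|) Q\<close>, so the lower bound \<open>\<lambda> dx \<le> \<mu>\<^sub>w\<close>
  gives \<open>|Z| \<le> (4 max |w|)\<^sup>n |Q| / \<lambda>\<close>. As \<open>max |w| \<le> 12 a\<close>, this forces \<open>N \<le> 48\<^sup>n / \<lambda>\<^sup>2\<close>
  for every \<open>N\<close>, which is absurd.
\<close>

section \<open>Convexity\<close>

lemma convex_on_add_affine:
  fixes u :: "'a::real_inner \<Rightarrow> real"
  assumes "convex_on S u"
  shows "convex_on S (\<lambda>z. u z + c + q \<bullet> z)"
proof -
  have "convex_on S (\<lambda>z. c)"
    using convex_on_imp_convex[OF assms] by (simp add: convex_on_const)
  moreover have "convex_on S (\<lambda>z. q \<bullet> z)"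
    using convex_on_imp_convex[OF assms] by (simp add: convex_on_def inner_simps)
  ultimately show ?thesis
    using assms by (intro convex_on_add)
qed

lemma convex_strict_sublevel:
  assumes "convex_on \<Omega> f"
  shows "convex {z\<in>\<Omega>. f z < c}"
proof (rule convexI)
  fix a b and s t :: real
  assume a: "a \<in> {z\<in>\<Omega>. f z < c}" and b: "b \<in> {z\<in>\<Omega>. f z < c}" and st: "0 \<le> s" "0 \<le> t" "s + t = 1"
  have "s *\<^sub>R a + t *\<^sub>R b \<in> \<Omega>"
    using a b st convex_on_imp_convex[OF assms] by (auto intro: convexD)
  moreover have "f (s *\<^sub>R a + t *\<^sub>R b) \<le> s * f a + t * f b"
    using a b st assms by (auto simp: convex_on_def)
  moreover have "s * f a + t * f b < c"
    using a b st by (auto intro: convex_bound_lt)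
  ultimately show "s *\<^sub>R a + t *\<^sub>R b \<in> {z\<in>\<Omega>. f z < c}"
    by simp
qed

lemma convex_sublevel:
  assumes "convex_on \<Omega> f"
  shows "convex {z\<in>\<Omega>. f z \<le> c}"
proof (rule convexI)
  fix a b and s t :: real
  assume a: "a \<in> {z\<in>\<Omega>. f z \<le> c}" and b: "b \<in> {z\<in>\<Omega>. f z \<le> c}" and st: "0 \<le> s" "0 \<le> t" "s + t = 1"
  have "s *\<^sub>R a + t *\<^sub>R b \<in> \<Omega>"
    using a b st convex_on_imp_convex[OF assms] by (auto intro: convexD)
  moreover have "f (s *\<^sub>R a + t *\<^sub>R b) \<le> s * f a + t * f b"
    using a b st assms by (auto simp: convex_on_def)
  moreover have "s * f a + t * f b \<le> c"
    using a b st by (auto intro: convex_bound_le)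
  ultimately show "s *\<^sub>R a + t *\<^sub>R b \<in> {z\<in>\<Omega>. f z \<le> c}"
    by simp
qed

lemma convex_zero_set_nonneg:
  assumes "convex_on \<Omega> g" "\<forall>z\<in>\<Omega>. 0 \<le> g z"
  shows "convex {z\<in>\<Omega>. g z = 0}"
proof -
  have "{z\<in>\<Omega>. g z = 0} = {z\<in>\<Omega>. g z \<le> 0}"
    using assms(2) by force
  then show ?thesis
    using convex_sublevel[OF assms(1)] by simp
qed

lemma convex_on_local_min_imp_min:
  fixes f :: "'a::real_normed_vector \<Rightarrow> real"
  assumes "convex_on \<Omega> f" "x \<in> Z" "open Z" "Z \<subseteq> \<Omega>" "\<forall>z\<in>Z. f x \<le> f z" "y \<in> \<Omega>"
  shows "f x \<le> f y"
proof -
  obtain r where r: "r > 0" "ball x r \<subseteq> Z"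
    using assms(2,3) open_contains_ball by blast
  obtain t where t: "0 < t" "t \<le> 1" "(1 - t) *\<^sub>R x + t *\<^sub>R y \<in> ball x r"
  proof (cases "y = x")
    case True
    then show ?thesis using that[of 1] r by simp
  next
    case False
    define t where "t = min 1 (r / (2 * norm (y - x)))"
    have "norm (t *\<^sub>R (y - x)) = t * norm (y - x)"
      using r by (simp add: t_def)
    also have "\<dots> \<le> r / (2 * norm (y - x)) * norm (y - x)"
      by (intro mult_right_mono) (auto simp: t_def)
    also have "\<dots> < r"
      using False r by simp
    finally have "norm (t *\<^sub>R (y - x)) < r" .
    then show ?thesis
      using that[of t] False r
      by (simp add: t_def dist_norm algebra_simps norm_minus_commute)
  qed
  have "f x \<le> f ((1 - t) *\<^sub>R x + t *\<^sub>R y)"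
    using assms(5) r t by blast
  also have "\<dots> \<le> (1 - t) * f x + t * f y"
    using convex_onD[OF assms(1)] assms(2,4,6) t by auto
  finally show ?thesis
    using t by (simp add: algebra_simps)
qed

lemma convex_subset_ball_if_avoids_sphere:
  fixes S :: "'a::real_normed_vector set"
  assumes "convex S" "S \<inter> ball c r \<noteq> {}" "S \<inter> sphere c r = {}"
  shows "S \<subseteq> ball c r"
proof (rule ccontr)
  assume "\<not> S \<subseteq> ball c r"
  then have "S - ball c r \<noteq> {}"
    by blast
  moreover obtain x where "x \<in> S" "dist c x < r"
    using assms(2) by auto
  then have "0 < r"
    using zero_le_dist[of c x] by linarith
  ultimately show False
    using connected_Int_frontier[OF convex_connected[OF assms(1)] assms(2)] assms(3) by simp
qed

lemma compact_small_multiple_below: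
  assumes "compact F" "continuous_on F g" "continuous_on F h" "\<forall>z\<in>F. 0 < g z"
  shows "\<exists>\<epsilon>>0. \<forall>z\<in>F. \<epsilon> * h z < (g z :: real)"
proof (cases "F = {}")
  case False
  obtain z1 where z1: "z1 \<in> F" "\<forall>z\<in>F. g z1 \<le> g z"
    using continuous_attains_inf[OF assms(1) False assms(2)] by blast
  obtain z2 where z2: "z2 \<in> F" "\<forall>z\<in>F. h z \<le> h z2"
    using continuous_attains_sup[OF assms(1) False assms(3)] by blast
  define \<epsilon> where "\<epsilon> = g z1 / (\<bar>h z2\<bar> + 1)"
  have "0 < \<epsilon>"
    using assms(4) z1(1) by (simp add: \<epsilon>_def)
  have "\<epsilon> * h z < g z" if "z \<in> F" for z
  proof -
    have "\<epsilon> * h z \<le> \<epsilon> * \<bar>h z2\<bar>"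
      using z2 that \<open>0 < \<epsilon>\<close> by (intro mult_left_mono) auto
    also have "\<dots> < \<epsilon> * (\<bar>h z2\<bar> + 1)"
      using \<open>0 < \<epsilon>\<close> by simp
    also have "\<dots> = g z1"
      by (simp add: \<epsilon>_def)
    also have "\<dots> \<le> g z"
      using z1 that by blast
    finally show ?thesis .
  qed
  then show ?thesis
    using \<open>0 < \<epsilon>\<close> by blast
qed (auto intro: exI[of _ 1])

lemma extreme_point_cap:
  fixes W :: "'a::euclidean_space set"
  assumes "convex W" "z0 extreme_point_of W" "0 < r" "compact (W \<inter> sphere z0 r)"
  obtains e \<alpha> where "\<alpha> < e \<bullet> z0" "\<forall>z\<in>W. \<alpha> \<le> e \<bullet> z \<longrightarrow> z \<in> ball z0 r"
proof -
  define S where "S = W \<inter> sphere z0 r"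
  have "z0 \<notin> convex hull S"
  proof
    assume z0: "z0 \<in> convex hull S"
    have "convex hull S \<subseteq> W"
      using assms(1) by (intro hull_minimal) (auto simp: S_def)
    then have "z0 extreme_point_of (convex hull S)"
      using assms(2) z0 by (auto simp: extreme_point_of_def)
    then have "z0 \<in> S"
      by (rule extreme_point_of_convex_hull)
    then show False
      using assms(3) by (simp add: S_def)
  qed
  then obtain a b where ab: "a \<bullet> z0 < b" "\<forall>x\<in>convex hull S. b < a \<bullet> x"
    using separating_hyperplane_closed_point[OF convex_convex_hull
        compact_imp_closed[OF compact_convex_hull]] assms(4) S_def by blast
  have "W \<inter> {z. - b \<le> (- a) \<bullet> z} \<subseteq> ball z0 r"
  proof (rule convex_subset_ball_if_avoids_sphere)
    show "convex (W \<inter> {z. - b \<le> (- a) \<bullet> z})"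
      using assms(1) convex_halfspace_ge by (rule convex_Int)
    show "W \<inter> {z. - b \<le> (- a) \<bullet> z} \<inter> ball z0 r \<noteq> {}"
      using ab(1) assms(2,3) extreme_point_of_stillconvex by (auto simp: extreme_point_of_def)
    show "W \<inter> {z. - b \<le> (- a) \<bullet> z} \<inter> sphere z0 r = {}"
      using ab(2) hull_subset[of S convex] by (force simp: S_def)
  qed
  then show ?thesis
    using ab(1) by (intro that[of "- b" "- a"]) auto
qed

section \<open>Subgradients\<close>

lemma subdiff_add_affine:
  "subdiff \<Omega> (\<lambda>z. u z + c + q \<bullet> z) x = (+) q ` subdiff \<Omega> u x"
proof (intro set_eqI iffI)
  fix r
  assume "r \<in> subdiff \<Omega> (\<lambda>z. u z + c + q \<bullet> z) x"
  then have "r - q \<in> subdiff \<Omega> u x"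
    by (simp add: subdiff_def inner_simps algebra_simps)
  then show "r \<in> (+) q ` subdiff \<Omega> u x"
    by (rule image_eqI[rotated]) simp
next
  fix r
  assume "r \<in> (+) q ` subdiff \<Omega> u x"
  then show "r \<in> subdiff \<Omega> (\<lambda>z. u z + c + q \<bullet> z) x"
    by (auto simp: subdiff_def inner_simps algebra_simps)
qed

lemma MA_measure_add_affine:
  "MA_measure \<Omega> (\<lambda>z. u z + c + q \<bullet> z) E = MA_measure \<Omega> u E"
proof -
  have "(\<Union>x\<in>E. subdiff \<Omega> (\<lambda>z. u z + c + q \<bullet> z) x)
      = (\<lambda>r. 1 *\<^sub>R r + q) ` (\<Union>x\<in>E. subdiff \<Omega> u x)"
    unfolding subdiff_add_affine by (auto simp: add.commute)
  then show ?thesis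
    using emeasure_lebesgue_affine[of 1 q "\<Union>x\<in>E. subdiff \<Omega> u x"]
    by (simp add: MA_measure_def)
qed

lemma subdiff_if_local_min:
  fixes w :: "'a::euclidean_space \<Rightarrow> real"
  assumes "convex_on \<Omega> w" "x \<in> Z" "open Z" "Z \<subseteq> \<Omega>"
    and "\<forall>z\<in>Z. w x - p \<bullet> x \<le> w z - p \<bullet> z"
  shows "p \<in> subdiff \<Omega> w x"
proof -
  have "convex_on \<Omega> (\<lambda>z. w z + 0 + (- p) \<bullet> z)"
    by (rule convex_on_add_affine[OF assms(1)])
  then have "w x - p \<bullet> x \<le> w y - p \<bullet> y" if "y \<in> \<Omega>" for y
    using convex_on_local_min_imp_min[of \<Omega> "\<lambda>z. w z - p \<bullet> z", OF _ assms(2-5) that] by simp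
  then show ?thesis
    by (simp add: subdiff_def inner_diff_right algebra_simps)
qed

text \<open>The minimum of \<open>w z - p \<bullet> z\<close> over \<open>closure Z\<close> cannot lie outside \<open>Z\<close>, where \<open>w \<ge> 0\<close>,
  because the slope condition makes the value at \<open>y\<close> smaller; an interior minimum is a
  subgradient point.\<close>
lemma slope_in_subdiff_image:
  fixes w :: "'a::euclidean_space \<Rightarrow> real"
  assumes "open \<Omega>" "convex_on \<Omega> w" "closure Z \<subseteq> \<Omega>" "open Z" "bounded Z"
    and "\<forall>z\<in>\<Omega> - Z. 0 \<le> w z" "y \<in> Z"
    and "\<forall>z\<in>closure Z. p \<bullet> (z - y) < - w y"
  shows "\<exists>x\<in>Z. p \<in> subdiff \<Omega> w x"
proof -
  have "continuous_on (closure Z) (\<lambda>z. w z - p \<bullet> z)"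
    using convex_on_continuous[OF assms(1,2)] assms(3)
    by (intro continuous_intros) (rule continuous_on_subset)
  moreover have "closure Z \<noteq> {}"
    using assms(7) closure_subset by blast
  moreover have "compact (closure Z)"
    using assms(5) by simp
  ultimately obtain x where x: "x \<in> closure Z" "\<forall>z\<in>closure Z. w x - p \<bullet> x \<le> w z - p \<bullet> z"
    using continuous_attains_inf[of "closure Z"] by blast
  have "x \<in> Z"
  proof (rule ccontr)
    assume "x \<notin> Z"
    then have "0 \<le> w x"
      using assms(3,6) x(1) by blast
    moreover have "p \<bullet> (x - y) < - w y" "w x - p \<bullet> x \<le> w y - p \<bullet> y"
      using assms(7,8) x closure_subset by auto
    ultimately show False
      by (simp add: inner_diff_right)
  qed
  moreover have "p \<in> subdiff \<Omega> w x"
    using x closure_subset assms(3) by (intro subdiff_if_local_min[OF assms(2) \<open>x \<in> Z\<close> assms(4)]) auto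
  ultimately show ?thesis by blast
qed

section \<open>Polar bodies\<close>

lemma measure_pos_if_ball_subset:
  fixes S :: "'a::euclidean_space set"
  assumes "0 < d" "ball c d \<subseteq> S" "S \<in> lmeasurable"
  shows "0 < measure lebesgue S"
proof -
  have "0 < measure lebesgue (ball c d)"
    using content_ball_pos[OF assms(1)] by simp
  also have "\<dots> \<le> measure lebesgue S"
    using assms by (intro measure_mono_fmeasurable) auto
  finally show ?thesis .
qed

definition polar_body :: "'a::real_inner set \<Rightarrow> 'a \<Rightarrow> 'a set" where
  "polar_body Z x0 = {q. \<forall>z\<in>Z. q \<bullet> (z - x0) \<le> 1}"

lemma closed_polar_body: "closed (polar_body Z x0)"
proof -
  have "polar_body Z x0 = (\<Inter>z\<in>Z. {q. (z - x0) \<bullet> q \<le> 1})"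
    by (auto simp: polar_body_def inner_commute)
  then show ?thesis
    by (auto intro!: closed_Inter closed_halfspace_le)
qed

lemma polar_body_subset_cball:
  fixes Z :: "'a::real_inner set"
  assumes "0 < d" "ball x0 d \<subseteq> Z"
  shows "polar_body Z x0 \<subseteq> cball 0 (2 / d)"
proof
  fix q
  assume q: "q \<in> polar_body Z x0"
  show "q \<in> cball 0 (2 / d)"
  proof (cases "q = 0")
    case False
    define z where "z = x0 + (d / 2 / norm q) *\<^sub>R q"
    have "z \<in> Z"
      using False assms by (auto simp: z_def dist_norm)
    then have "q \<bullet> (z - x0) \<le> 1"
      using q by (auto simp: polar_body_def)
    moreover have "q \<bullet> (z - x0) = d / 2 * norm q"
      using False by (simp add: z_def power2_norm_eq_inner[symmetric] power2_eq_square)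
    ultimately show ?thesis
      using assms(1) by (simp add: field_simps)
  qed (use assms in simp)
qed

lemma cball_subset_polar_body:
  fixes Z :: "'a::real_inner set"
  assumes "0 < r" "Z \<subseteq> ball x0 r"
  shows "cball 0 (1 / r) \<subseteq> polar_body Z x0"
proof (clarsimp simp: polar_body_def)
  fix q z :: 'a
  assume "norm q \<le> 1 / r" "z \<in> Z"
  then have "norm q * norm (z - x0) \<le> 1 / r * r"
    using assms by (intro mult_mono) (auto simp: dist_norm norm_minus_commute)
  then show "q \<bullet> (z - x0) \<le> 1"
    using norm_cauchy_schwarz[of q "z - x0"] assms(1) by simp
qed

lemma polar_body_lmeasurable:
  fixes Z :: "'a::euclidean_space set"
  assumes "0 < d" "ball x0 d \<subseteq> Z"
  shows "polar_body Z x0 \<in> lmeasurable"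
  using polar_body_subset_cball[OF assms] closed_polar_body[of Z x0]
  by (intro bounded_set_imp_lmeasurable) (auto intro: bounded_subset)

lemma affine_image_polar_body:
  fixes Z :: "'a::euclidean_space set"
  assumes "0 < d" "ball x0 d \<subseteq> Z" "0 < a"
  shows "(\<lambda>q. a *\<^sub>R q + t) ` polar_body Z x0 \<in> sets lebesgue"
    and "emeasure lebesgue ((\<lambda>q. a *\<^sub>R q + t) ` polar_body Z x0)
           = ennreal (a ^ DIM('a) * measure lebesgue (polar_body Z x0))"
proof -
  have "(\<lambda>q. a *\<^sub>R q + t) ` polar_body Z x0 = (+) t ` ((\<lambda>q. a *\<^sub>R q) ` polar_body Z x0)"
    by (auto simp: image_image add.commute)
  then have "closed ((\<lambda>q. a *\<^sub>R q + t) ` polar_body Z x0)"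
    using closed_translation[OF closed_scaling[OF closed_polar_body]] by simp
  then show "(\<lambda>q. a *\<^sub>R q + t) ` polar_body Z x0 \<in> sets lebesgue"
    by simp
  show "emeasure lebesgue ((\<lambda>q. a *\<^sub>R q + t) ` polar_body Z x0)
      = ennreal (a ^ DIM('a) * measure lebesgue (polar_body Z x0))"
    using emeasure_lebesgue_affine[of a t "polar_body Z x0"] polar_body_lmeasurable[OF assms(1,2)] assms(3)
    by (simp add: emeasure_eq_measure2 ennreal_mult)
qed

lemma polar_body_measure_pos:
  fixes Z :: "'a::euclidean_space set"
  assumes "0 < d" "ball x0 d \<subseteq> Z" "bounded Z"
  shows "0 < measure lebesgue (polar_body Z x0)"
proof -
  obtain r where "0 < r" "Z \<subseteq> ball x0 r"
    using bounded_subset_ballD[OF assms(3)] by blast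
  then have "ball 0 (1 / r) \<subseteq> polar_body Z x0"
    using cball_subset_polar_body ball_subset_cball by blast
  then show ?thesis
    using \<open>0 < r\<close> polar_body_lmeasurable[OF assms(1,2)]
    by (intro measure_pos_if_ball_subset[of "1 / r" 0]) auto
qed

lemma polar_body_inner_bounds:
  assumes "q \<in> polar_body Z x0" "y \<in> Z" "x0 - (1/2) *\<^sub>R (y - x0) \<in> Z"
  shows "-2 \<le> q \<bullet> (y - x0)" "q \<bullet> (y - x0) \<le> 1"
proof -
  have "q \<bullet> ((x0 - (1/2) *\<^sub>R (y - x0)) - x0) \<le> 1"
    using assms(1,3) by (auto simp: polar_body_def)
  then show "-2 \<le> q \<bullet> (y - x0)"
    by (simp add: inner_simps)
  show "q \<bullet> (y - x0) \<le> 1"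
    using assms(1,2) by (auto simp: polar_body_def)
qed

lemma stacked_polars_disjoint:
  fixes Z :: "'a::real_inner set"
  assumes "0 < a" "y \<in> Z" "x0 - (1/2) *\<^sub>R (y - x0) \<in> Z" "v \<bullet> (y - x0) = 1"
  shows "disjoint_family (\<lambda>k::nat. (\<lambda>q. a *\<^sub>R q + (4 * a * real k) *\<^sub>R v) ` polar_body Z x0)"
proof -
  define A where "A k = (\<lambda>q. a *\<^sub>R q + (4 * a * real k) *\<^sub>R v) ` polar_body Z x0" for k :: nat
  have slab: "a * (4 * real k - 2) \<le> p \<bullet> (y - x0) \<and> p \<bullet> (y - x0) \<le> a * (4 * real k + 1)"
    if p: "p \<in> A k" for p k
  proof -
    obtain q where q: "q \<in> polar_body Z x0" "p = a *\<^sub>R q + (4 * a * real k) *\<^sub>R v"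
      using p unfolding A_def by blast
    then have "p \<bullet> (y - x0) = a * (q \<bullet> (y - x0) + 4 * real k)"
      by (simp only: inner_add_left inner_scaleR_left assms(4)) (simp add: algebra_simps)
    then show ?thesis
      using polar_body_inner_bounds[OF q(1) assms(2,3)] assms(1) by simp
  qed
  have slab_le: "4 * real m - 2 \<le> 4 * real n + 1" if "p \<in> A m" "p \<in> A n" for p m n
  proof -
    have "a * (4 * real m - 2) \<le> a * (4 * real n + 1)"
      using slab[OF that(1)] slab[OF that(2)] by linarith
    then show ?thesis
      using assms(1) by simp
  qed
  have "m = n" if "p \<in> A m" "p \<in> A n" for p m n
  proof -
    have "real m < real (Suc n)" "real n < real (Suc m)"
      using slab_le[OF that] slab_le[OF that(2,1)] by simp_all
    then show ?thesis
      by (simp only: of_nat_less_iff)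
  qed
  then show ?thesis
    unfolding disjoint_family_on_def A_def[symmetric] by blast
qed

section \<open>Sections with two-sided Monge-Ampere bounds\<close>

locale MA_section =
  fixes \<Omega> :: "'a::euclidean_space set" and w :: "'a \<Rightarrow> real" and Z :: "'a set" and lam :: real
  assumes open_domain: "open \<Omega>"
    and convex_w: "convex_on \<Omega> w"
    and section_eq: "Z = {z\<in>\<Omega>. w z < 0}"
    and bounded_section: "bounded Z"
    and closure_section: "closure Z \<subseteq> \<Omega>"
    and lam_pos: "0 < lam"
    and MA_bounds: "\<And>E. E \<in> sets borel \<Longrightarrow> E \<subseteq> \<Omega> \<Longrightarrow>
           ennreal lam * emeasure lebesgue E \<le> MA_measure \<Omega> w E
         \<and> MA_measure \<Omega> w E \<le> ennreal (1 / lam) * emeasure lebesgue E"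
begin

lemma open_section: "open Z"
proof -
  have "Z = \<Omega> \<inter> w -` {..<0}"
    by (auto simp: section_eq)
  then show ?thesis
    using continuous_open_preimage[OF convex_on_continuous[OF open_domain convex_w] open_domain]
    by simp
qed

lemma convex_section: "convex Z"
  unfolding section_eq by (rule convex_strict_sublevel[OF convex_w])

lemma nonneg_outside_section: "\<forall>z\<in>\<Omega> - Z. 0 \<le> w z"
  by (auto simp: section_eq)

lemma section_lmeasurable: "Z \<in> lmeasurable"
  using bounded_section open_section by (intro bounded_set_imp_lmeasurable) auto

lemma subdiff_image_measurable:
  assumes "open E" "E \<subseteq> \<Omega>" "0 < emeasure lebesgue E"
  shows "(\<Union>x\<in>E. subdiff \<Omega> w x) \<in> sets lebesgue"
proof (rule emeasure_neq_0_sets)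
  have "0 < ennreal lam * emeasure lebesgue E"
    using lam_pos assms(3) by (simp add: ennreal_zero_less_mult_iff)
  also have "\<dots> \<le> emeasure lebesgue (\<Union>x\<in>E. subdiff \<Omega> w x)"
    using MA_bounds[of E] assms by (auto simp: MA_measure_def)
  finally show "emeasure lebesgue (\<Union>x\<in>E. subdiff \<Omega> w x) \<noteq> 0"
    by simp
qed

lemma subdiff_image_section_measurable:
  assumes "0 < d" "ball x0 d \<subseteq> Z"
  shows "(\<Union>x\<in>Z. subdiff \<Omega> w x) \<in> sets lebesgue"
  using measure_pos_if_ball_subset[OF assms section_lmeasurable] section_lmeasurable
    closure_section closure_subset
  by (intro subdiff_image_measurable[OF open_section]) (auto simp: emeasure_eq_measure2)

lemma stacked_polar_subset_subdiff:
  assumes "x0 \<in> Z" "y \<in> Z" "x0 - (1/2) *\<^sub>R (y - x0) \<in> Z"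
    and "\<forall>z\<in>Z. v \<bullet> (z - y) \<le> \<tau>" "4 * k * \<tau> < 3" "0 \<le> k"
  shows "(\<lambda>q. (- w y / 6) *\<^sub>R q + (4 * (- w y / 6) * k) *\<^sub>R v) ` polar_body Z x0
           \<subseteq> (\<Union>x\<in>Z. subdiff \<Omega> w x)"
proof (clarify)
  define a where "a = - w y / 6"
  fix q
  assume q: "q \<in> polar_body Z x0"
  have a_pos: "0 < a"
    using assms(2) by (simp add: a_def section_eq)
  have "(a *\<^sub>R q + (4 * a * k) *\<^sub>R v) \<bullet> (z - y) < - w y" if z: "z \<in> closure Z" for z
  proof -
    have "q \<bullet> (z - x0) \<le> 1"
      using q z by (intro continuous_le_on_closure[of Z "\<lambda>z. q \<bullet> (z - x0)" z 1] continuous_intros)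
        (auto simp: polar_body_def)
    moreover have "v \<bullet> (z - y) \<le> \<tau>"
      using assms(4) z by (intro continuous_le_on_closure[of Z "\<lambda>z. v \<bullet> (z - y)" z \<tau>] continuous_intros)
        auto
    moreover have "- 2 \<le> q \<bullet> (y - x0)"
      using polar_body_inner_bounds[OF q assms(2,3)] by simp
    ultimately have "q \<bullet> (z - x0) - q \<bullet> (y - x0) + 4 * k * (v \<bullet> (z - y)) < 6"
      using assms(5,6) mult_left_mono[of "v \<bullet> (z - y)" \<tau> "4 * k"] by linarith
    have "(a *\<^sub>R q + (4 * a * k) *\<^sub>R v) \<bullet> (z - y)
        = a * (q \<bullet> (z - x0) - q \<bullet> (y - x0) + 4 * k * (v \<bullet> (z - y)))"
      by (simp add: inner_simps algebra_simps)
    also have "\<dots> < a * 6"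
      using a_pos \<open>_ < 6\<close> by simp
    finally show ?thesis
      by (simp add: a_def)
  qed
  then show "(a *\<^sub>R q + (4 * a * k) *\<^sub>R v) \<in> (\<Union>x\<in>Z. subdiff \<Omega> w x)"
    using slope_in_subdiff_image[OF open_domain convex_w closure_section open_section bounded_section
        nonneg_outside_section assms(2)] by (simp add: a_def)
qed

lemma MA_stacked_polars_bound:
  assumes "x0 \<in> Z" "y \<in> Z" "x0 - (1/2) *\<^sub>R (y - x0) \<in> Z"
    and "v \<bullet> (y - x0) = 1" "\<forall>z\<in>Z. v \<bullet> (z - y) \<le> \<tau>" "4 * real (N - 1) * \<tau> < 3"
  shows "real N * (- w y / 6) ^ DIM('a) * measure lebesgue (polar_body Z x0)
           \<le> measure lebesgue Z / lam"
proof -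
  define a where "a = - w y / 6"
  define Q where "Q = polar_body Z x0"
  define A where "A k = (\<lambda>q. a *\<^sub>R q + (4 * a * real k) *\<^sub>R v) ` Q" for k
  have a_pos: "0 < a"
    using assms(2) by (simp add: a_def section_eq)
  obtain d where d: "0 < d" "ball x0 d \<subseteq> Z"
    using open_section assms(1) open_contains_ball by blast
  have "0 \<le> \<tau>"
    using assms(2,5) by force
  then have "A k \<subseteq> (\<Union>x\<in>Z. subdiff \<Omega> w x)" if "k < N" for k
    using that assms(6) mult_left_mono[of "real k" "real (N - 1)" "4 * \<tau>"]
    unfolding A_def a_def Q_def
    by (intro stacked_polar_subset_subdiff[OF assms(1,2,3,5)]) (auto simp: algebra_simps)
  then have A_subdiff: "emeasure lebesgue (\<Union>k<N. A k) \<le> emeasure lebesgue (\<Union>x\<in>Z. subdiff \<Omega> w x)"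
    by (intro emeasure_mono subdiff_image_section_measurable[OF d]) auto
  have A_disjoint: "disjoint_family_on A {..<N}"
    unfolding A_def Q_def
    by (rule disjoint_family_on_mono[OF subset_UNIV stacked_polars_disjoint[OF a_pos assms(2-4)]])
  have "ennreal (real N * (a ^ DIM('a) * measure lebesgue Q)) = (\<Sum>k<N. emeasure lebesgue (A k))"
    using a_pos by (simp add: A_def Q_def affine_image_polar_body(2)[OF d a_pos] ennreal_of_nat_eq_real_of_nat
        ennreal_mult)
  also have "\<dots> = emeasure lebesgue (\<Union>k<N. A k)"
    using affine_image_polar_body(1)[OF d a_pos] by (intro sum_emeasure A_disjoint) (auto simp: A_def Q_def)
  also have "\<dots> \<le> MA_measure \<Omega> w Z"
    using A_subdiff by (simp add: MA_measure_def)
  also have "\<dots> \<le> ennreal (1 / lam) * ennreal (measure lebesgue Z)"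
    using MA_bounds[of Z] open_section closure_section closure_subset section_lmeasurable
    by (auto simp: emeasure_eq_measure2)
  also have "\<dots> = ennreal (measure lebesgue Z / lam)"
    using lam_pos by (simp add: ennreal_mult[symmetric] del: ennreal_mult')
  finally show ?thesis
    using lam_pos by (simp add: a_def Q_def mult.assoc ennreal_le_iff del: ennreal_mult')
qed

lemma subdiff_half_section_subset_polar:
  assumes "x0 \<in> Z" "x \<in> Z" "\<forall>z\<in>Z. - M \<le> w z"
    and "p \<in> subdiff \<Omega> w ((1/2) *\<^sub>R x + (1/2) *\<^sub>R x0)"
  shows "(1 / (2 * M)) *\<^sub>R p \<in> polar_body Z x0"
proof -
  have "0 < M"
    using assms(1,3) by (force simp: section_eq)
  have "p \<bullet> (z - x0) < 2 * M" if z: "z \<in> Z" for z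
  proof -
    define e where "e = (1/2) *\<^sub>R x + (1/2) *\<^sub>R x0"
    define z' where "z' = (1/2) *\<^sub>R x + (1/2) *\<^sub>R z"
    have "e \<in> Z" "z' \<in> Z"
      using convexD[OF convex_section, of _ _ "1/2" "1/2"] assms(1,2) z by (auto simp: e_def z'_def)
    then have "w e + p \<bullet> (z' - e) \<le> w z'" "w z' < 0" "- M \<le> w e"
      using assms(3,4) by (auto simp: subdiff_def section_eq e_def)
    moreover have "p \<bullet> (z' - e) = p \<bullet> (z - x0) / 2"
      by (simp add: z'_def e_def algebra_simps inner_simps)
    ultimately show ?thesis
      by linarith
  qed
  then show ?thesis
    using \<open>0 < M\<close> by (simp add: polar_body_def less_imp_le)
qed

lemma MA_half_section_bound:
  assumes "x0 \<in> Z" "\<forall>z\<in>Z. - M \<le> w z"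
  shows "lam * (1/2) ^ DIM('a) * measure lebesgue Z
           \<le> (2 * M) ^ DIM('a) * measure lebesgue (polar_body Z x0)"
proof -
  define Q where "Q = polar_body Z x0"
  define E where "E = (\<lambda>x. (1/2) *\<^sub>R x + (1/2) *\<^sub>R x0) ` Z"
  define B where "B = (\<lambda>q. (2 * M) *\<^sub>R q + 0) ` Q"
  have "0 < M"
    using assms by (force simp: section_eq)
  obtain d where d: "0 < d" "ball x0 d \<subseteq> Z"
    using open_section assms(1) open_contains_ball by blast
  have "E \<subseteq> Z"
    using convexD[OF convex_section assms(1), of _ "1/2" "1/2"] by (auto simp: E_def add.commute)
  moreover have "open E"
    unfolding E_def using open_affinity[OF open_section, of "1/2" "(1/2) *\<^sub>R x0"]
    by (simp add: add.commute)
  moreover have E_measure: "emeasure lebesgue E = ennreal ((1/2) ^ DIM('a) * measure lebesgue Z)"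
    using emeasure_lebesgue_affine[of "1/2" "(1/2) *\<^sub>R x0" Z] section_lmeasurable
    by (simp add: E_def emeasure_eq_measure2 ennreal_mult[symmetric] power_divide del: ennreal_mult')
  ultimately have "ennreal (lam * ((1/2) ^ DIM('a) * measure lebesgue Z))
      \<le> emeasure lebesgue (\<Union>x\<in>E. subdiff \<Omega> w x)"
    using MA_bounds[of E] closure_section closure_subset lam_pos
    by (auto simp: MA_measure_def ennreal_mult)
  also have "\<dots> \<le> emeasure lebesgue B"
  proof (rule emeasure_mono)
    show "(\<Union>x\<in>E. subdiff \<Omega> w x) \<subseteq> B"
    proof (clarsimp simp: E_def)
      fix x p
      assume "x \<in> Z" "p \<in> subdiff \<Omega> w ((1/2) *\<^sub>R x + (1/2) *\<^sub>R x0)"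
      then have "(1 / (2 * M)) *\<^sub>R p \<in> Q"
        using subdiff_half_section_subset_polar assms by (simp add: Q_def)
      then show "p \<in> B"
        using \<open>0 < M\<close> by (auto simp: B_def image_iff intro!: bexI[of _ "(1 / (2 * M)) *\<^sub>R p"])
    qed
    show "B \<in> sets lebesgue"
      unfolding B_def Q_def using \<open>0 < M\<close> by (intro affine_image_polar_body(1)[OF d]) simp
  qed
  also have "\<dots> = ennreal ((2 * M) ^ DIM('a) * measure lebesgue Q)"
    unfolding B_def Q_def using \<open>0 < M\<close> by (intro affine_image_polar_body(2)[OF d]) simp
  finally show ?thesis
    using \<open>0 < M\<close> by (simp add: Q_def mult.assoc ennreal_le_iff del: ennreal_mult')
qed

lemma section_stacking_bound:
  assumes "x0 \<in> Z" "y \<in> Z" "x0 - (1/2) *\<^sub>R (y - x0) \<in> Z"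
    and "v \<bullet> (y - x0) = 1" "\<forall>z\<in>Z. v \<bullet> (z - y) \<le> \<tau>" "4 * real (N - 1) * \<tau> < 3"
    and "\<forall>z\<in>Z. - M \<le> w z"
  shows "real N * (- w y / 6) ^ DIM('a) \<le> (4 * M) ^ DIM('a) / lam\<^sup>2"
proof -
  define q where "q = measure lebesgue (polar_body Z x0)"
  obtain d where d: "0 < d" "ball x0 d \<subseteq> Z"
    using open_section assms(1) open_contains_ball by blast
  have "0 < q"
    unfolding q_def by (rule polar_body_measure_pos[OF d bounded_section])
  have "lam * measure lebesgue Z = 2 ^ DIM('a) * (lam * (1/2) ^ DIM('a) * measure lebesgue Z)"
    by (simp add: power_one_over)
  also have "\<dots> \<le> 2 ^ DIM('a) * ((2 * M) ^ DIM('a) * q)"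
    using MA_half_section_bound[OF assms(1,7)] unfolding q_def by (intro mult_left_mono) auto
  also have "\<dots> = (2 * (2 * M)) ^ DIM('a) * q"
    by (simp only: power_mult_distrib mult.assoc)
  also have "\<dots> = (4 * M) ^ DIM('a) * q"
    by simp
  finally have Z_bound: "measure lebesgue Z \<le> (4 * M) ^ DIM('a) * q / lam"
    using lam_pos by (simp add: pos_le_divide_eq mult.commute)
  have "real N * (- w y / 6) ^ DIM('a) * q \<le> measure lebesgue Z / lam"
    using MA_stacked_polars_bound[OF assms(1-6)] by (simp add: q_def)
  also have "\<dots> \<le> (4 * M) ^ DIM('a) * q / lam / lam"
    using Z_bound lam_pos by (intro divide_right_mono) auto
  also have "\<dots> = (4 * M) ^ DIM('a) / lam\<^sup>2 * q"
    by (simp add: power2_eq_square)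
  finally show ?thesis
    using mult_le_cancel_right_pos[OF \<open>0 < q\<close>] by blast
qed

lemma section_height_bound:
  assumes segment: "\<And>s. 0 < s \<Longrightarrow> s \<le> 1 \<Longrightarrow> y' + s *\<^sub>R (y - y') \<in> Z"
    and "0 < e \<bullet> (y - y')" "\<forall>z\<in>Z. e \<bullet> (z - y') < e \<bullet> (y - y') + \<gamma>"
    and "8 * real (N - 1) * \<gamma> < 3 * (e \<bullet> (y - y'))" "\<forall>z\<in>Z. - M \<le> w z"
  shows "real N * (- w y / 6) ^ DIM('a) \<le> (4 * M) ^ DIM('a) / lam\<^sup>2"
proof -
  define H where "H = e \<bullet> (y - y')"
  define x0 where "x0 = y' + (1/2) *\<^sub>R (y - y')"
  define v where "v = (2 / H) *\<^sub>R e"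
  have "0 < H"
    using assms(2) by (simp add: H_def)
  have quarter: "x0 - (1/2) *\<^sub>R (y - x0) = y' + (1/4) *\<^sub>R (y - y')"
    by (rule euclidean_eqI) (simp add: x0_def inner_simps algebra_simps)
  have "y - x0 = (1/2) *\<^sub>R (y - y')"
    by (rule euclidean_eqI) (simp add: x0_def inner_simps algebra_simps)
  then have "v \<bullet> (y - x0) = 1"
    using \<open>0 < H\<close> by (simp add: v_def H_def[symmetric])
  moreover have "\<forall>z\<in>Z. v \<bullet> (z - y) \<le> 2 * \<gamma> / H"
  proof
    fix z
    assume "z \<in> Z"
    have "e \<bullet> (z - y) = e \<bullet> (z - y') - H"
      by (simp add: H_def inner_diff_right)
    then have "v \<bullet> (z - y) = 2 / H * (e \<bullet> (z - y') - H)"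
      by (simp add: v_def)
    also have "\<dots> \<le> 2 / H * \<gamma>"
      using assms(3) \<open>z \<in> Z\<close> \<open>0 < H\<close> by (intro mult_left_mono) (auto simp: H_def less_imp_le)
    finally show "v \<bullet> (z - y) \<le> 2 * \<gamma> / H"
      by simp
  qed
  moreover have "4 * real (N - 1) * (2 * \<gamma> / H) < 3"
    using assms(4) \<open>0 < H\<close> by (simp add: H_def field_simps)
  moreover have "x0 \<in> Z" "y \<in> Z"
    using segment[of "1/2"] segment[of 1] by (simp_all add: x0_def)
  moreover have "x0 - (1/2) *\<^sub>R (y - x0) \<in> Z"
    unfolding quarter using segment[of "1/4"] by simp
  ultimately show ?thesis
    using section_stacking_bound assms(5) by blast
qed

end

lemma MA_section_affine_tilt:
  fixes g :: "'a::euclidean_space \<Rightarrow> real"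
  assumes "open \<Omega>" "convex_on \<Omega> g" "0 < lam"
    and MA: "\<And>E. E \<in> sets borel \<Longrightarrow> E \<subseteq> \<Omega> \<Longrightarrow>
           ennreal lam * emeasure lebesgue E \<le> MA_measure \<Omega> g E
         \<and> MA_measure \<Omega> g E \<le> ennreal (1 / lam) * emeasure lebesgue E"
    and "{z\<in>\<Omega>. g z + a + q \<bullet> z < 0} \<subseteq> ball c r" "cball c r \<subseteq> \<Omega>"
  shows "MA_section \<Omega> (\<lambda>z. g z + a + q \<bullet> z) {z\<in>\<Omega>. g z + a + q \<bullet> z < 0} lam"
proof
  show "convex_on \<Omega> (\<lambda>z. g z + a + q \<bullet> z)"
    by (rule convex_on_add_affine[OF assms(2)])
  show "bounded {z\<in>\<Omega>. g z + a + q \<bullet> z < 0}"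
    using assms(5) by (rule bounded_subset[OF bounded_ball])
  have "closure {z\<in>\<Omega>. g z + a + q \<bullet> z < 0} \<subseteq> cball c r"
    using assms(5) ball_subset_cball by (intro closure_minimal) auto
  then show "closure {z\<in>\<Omega>. g z + a + q \<bullet> z < 0} \<subseteq> \<Omega>"
    using assms(6) by blast
qed (use assms(1,3) MA in \<open>simp_all add: MA_measure_add_affine\<close>)

lemma count_bound_from_stacking:
  fixes a M lam :: real
  assumes "0 < a" "0 \<le> M" "M \<le> 12 * a" "real N * a ^ n \<le> (4 * M) ^ n / lam\<^sup>2"
  shows "real N \<le> 48 ^ n / lam\<^sup>2"
proof -
  have "(4 * M) ^ n \<le> (48 * a) ^ n"
    using assms(2,3) by (intro power_mono) auto
  then have "real N * a ^ n \<le> (48 * a) ^ n / lam\<^sup>2"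
    using assms(4) divide_right_mono[of _ _ "lam\<^sup>2"] by force
  also have "\<dots> = 48 ^ n / lam\<^sup>2 * a ^ n"
    using power_mult_distrib[of "48::real" a n] by simp
  finally show ?thesis
    using mult_le_cancel_right_pos zero_less_power[OF assms(1)] by blast
qed

section \<open>Flat caps of the contact set\<close>

lemma cap_shell_gap:
  fixes g :: "'a::euclidean_space \<Rightarrow> real"
  assumes "continuous_on (cball c r) g" "\<forall>z\<in>cball c r. 0 \<le> g z"
    and cap: "\<forall>z\<in>cball c r. g z = 0 \<and> \<alpha> \<le> e \<bullet> z \<longrightarrow> z \<in> ball c r \<and> e \<bullet> z \<le> \<beta>"
    and "\<alpha> \<le> \<beta>" "0 < \<gamma>"
  obtains \<epsilon> where "0 < \<epsilon>"
    "\<forall>z\<in>cball c r. (z \<in> sphere c r \<and> \<alpha> \<le> e \<bullet> z) \<or> \<beta> + \<gamma> \<le> e \<bullet> z \<longrightarrow> \<epsilon> * (e \<bullet> z - \<alpha>) < g z"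
proof -
  define F where "F = (sphere c r \<inter> {z. \<alpha> \<le> e \<bullet> z}) \<union> (cball c r \<inter> {z. \<beta> + \<gamma> \<le> e \<bullet> z})"
  have F_sub: "F \<subseteq> cball c r"
    by (auto simp: F_def)
  have "closed F"
    unfolding F_def by (intro closed_Un closed_Int closed_halfspace_ge) auto
  then have "compact F"
    using F_sub by (auto simp: compact_eq_bounded_closed intro: bounded_subset)
  moreover have "continuous_on F g"
    using continuous_on_subset[OF assms(1) F_sub] .
  moreover have "continuous_on F (\<lambda>z. e \<bullet> z - \<alpha>)"
    by (intro continuous_intros)
  moreover have "\<forall>z\<in>F. 0 < g z"
  proof (rule ballI, rule ccontr)
    fix z
    assume z: "z \<in> F" "\<not> 0 < g z"
    then have "g z = 0" "\<alpha> \<le> e \<bullet> z"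
      using F_sub assms(2,4,5) by (force simp: F_def)+
    then have "z \<in> ball c r \<and> e \<bullet> z \<le> \<beta>"
      using cap z(1) F_sub by blast
    then show False
      using z(1) \<open>0 < \<gamma>\<close> unfolding F_def by auto
  qed
  ultimately obtain \<epsilon> where "0 < \<epsilon>" "\<forall>z\<in>F. \<epsilon> * (e \<bullet> z - \<alpha>) < g z"
    using compact_small_multiple_below by blast
  then show ?thesis
    by (intro that) (auto simp: F_def)
qed

lemma tilted_section_localized:
  fixes g :: "'a::euclidean_space \<Rightarrow> real"
  assumes "open \<Omega>" "convex_on \<Omega> g" "\<forall>z\<in>\<Omega>. 0 \<le> g z" "cball c r \<subseteq> \<Omega>"
    and "y \<in> \<Omega>" "g y = 0" "\<alpha> < e \<bullet> y"
    and cap: "\<forall>z\<in>\<Omega>. g z = 0 \<and> \<alpha> \<le> e \<bullet> z \<longrightarrow> z \<in> ball c r \<and> e \<bullet> z \<le> \<beta>"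
    and "0 < \<gamma>"
  obtains \<epsilon> where "0 < \<epsilon>"
    "\<forall>z\<in>\<Omega>. g z < \<epsilon> * (e \<bullet> z - \<alpha>) \<longrightarrow> z \<in> ball c r \<and> e \<bullet> z < \<beta> + \<gamma>"
proof -
  have y_cap: "y \<in> ball c r" "e \<bullet> y \<le> \<beta>"
    using cap assms(5-7) by auto
  have "continuous_on (cball c r) g"
    using continuous_on_subset[OF convex_on_continuous[OF assms(1,2)] assms(4)] .
  moreover have "\<forall>z\<in>cball c r. 0 \<le> g z"
    "\<forall>z\<in>cball c r. g z = 0 \<and> \<alpha> \<le> e \<bullet> z \<longrightarrow> z \<in> ball c r \<and> e \<bullet> z \<le> \<beta>"
    using assms(3,4) cap by blast+
  moreover have "\<alpha> \<le> \<beta>"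
    using assms(7) y_cap(2) by simp
  ultimately obtain \<epsilon> where \<epsilon>: "0 < \<epsilon>"
    "\<forall>z\<in>cball c r. (z \<in> sphere c r \<and> \<alpha> \<le> e \<bullet> z) \<or> \<beta> + \<gamma> \<le> e \<bullet> z \<longrightarrow> \<epsilon> * (e \<bullet> z - \<alpha>) < g z"
    using \<open>0 < \<gamma>\<close> by (rule cap_shell_gap)
  define Z where "Z = {z\<in>\<Omega>. g z < \<epsilon> * (e \<bullet> z - \<alpha>)}"
  have Z_eq: "Z = {z\<in>\<Omega>. g z + \<epsilon> * \<alpha> + (- \<epsilon> *\<^sub>R e) \<bullet> z < 0}"
    by (auto simp: Z_def algebra_simps)
  have above: "\<alpha> < e \<bullet> z" if "z \<in> Z" for z
  proof -
    have "0 < \<epsilon> * (e \<bullet> z - \<alpha>)"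
      using that assms(3) by (auto simp: Z_def intro: le_less_trans)
    then show ?thesis
      using \<epsilon>(1) by (simp add: zero_less_mult_iff)
  qed
  have "convex Z"
    unfolding Z_eq by (rule convex_strict_sublevel[OF convex_on_add_affine[OF assms(2)]])
  moreover have "y \<in> Z \<inter> ball c r"
    using y_cap assms(5-7) \<epsilon>(1) by (simp add: Z_def)
  moreover have "Z \<inter> sphere c r = {}"
    using above \<epsilon>(2) by (force simp: Z_def)
  ultimately have "Z \<subseteq> ball c r"
    by (intro convex_subset_ball_if_avoids_sphere) auto
  moreover have "e \<bullet> z < \<beta> + \<gamma>" if "z \<in> Z" "z \<in> ball c r" for z
  proof (rule ccontr)
    assume "\<not> e \<bullet> z < \<beta> + \<gamma>"
    then have "\<epsilon> * (e \<bullet> z - \<alpha>) < g z"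
      using that(2) \<epsilon>(2) by auto
    then show False
      using that(1) by (simp add: Z_def)
  qed
  ultimately show ?thesis
    by (intro that[OF \<epsilon>(1)]) (auto simp: Z_def)
qed

lemma tilted_section_stacking_bound:
  fixes g :: "'a::euclidean_space \<Rightarrow> real"
  assumes "open \<Omega>" "convex_on \<Omega> g" "\<forall>z\<in>\<Omega>. 0 \<le> g z" "0 < lam"
    and MA: "\<And>E. E \<in> sets borel \<Longrightarrow> E \<subseteq> \<Omega> \<Longrightarrow>
           ennreal lam * emeasure lebesgue E \<le> MA_measure \<Omega> g E
         \<and> MA_measure \<Omega> g E \<le> ennreal (1 / lam) * emeasure lebesgue E"
    and "cball c r \<subseteq> \<Omega>"
    and "y \<in> \<Omega>" "g y = 0" "y' \<in> \<Omega>" "g y' = 0" "e \<bullet> y' < e \<bullet> y" "0 < \<epsilon>"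
    and localized: "\<forall>z\<in>\<Omega>. g z < \<epsilon> * (e \<bullet> (z - y')) \<longrightarrow> z \<in> ball c r \<and> e \<bullet> (z - y) < \<gamma>"
    and "8 * real (N - 1) * \<gamma> < 3 * (e \<bullet> (y - y'))"
  shows "real N * (\<epsilon> * (e \<bullet> (y - y')) / 6) ^ DIM('a)
           \<le> (4 * (\<epsilon> * (e \<bullet> (y - y') + \<gamma>))) ^ DIM('a) / lam\<^sup>2"
proof -
  define H where "H = e \<bullet> (y - y')"
  have "0 < H"
    using assms(11) by (simp add: H_def inner_diff_right)
  define w where "w z = g z + \<epsilon> * (e \<bullet> y') + (- \<epsilon> *\<^sub>R e) \<bullet> z" for z
  have w_eq: "w z = g z - \<epsilon> * (e \<bullet> (z - y'))" for z
    by (simp add: w_def inner_simps algebra_simps)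
  define Z where "Z = {z\<in>\<Omega>. w z < 0}"
  have Z_cap: "z \<in> ball c r" "e \<bullet> (z - y') < H + \<gamma>" if "z \<in> Z" for z
    using that localized by (auto simp: Z_def w_eq H_def inner_diff_right)
  interpret MA_section \<Omega> w Z lam
    unfolding Z_def w_def using Z_cap(1)
    by (intro MA_section_affine_tilt[OF assms(1,2,4) MA _ assms(6)]) (auto simp: Z_def w_def)
  have "y' + s *\<^sub>R (y - y') \<in> Z" if "0 < s" "s \<le> 1" for s
  proof -
    have "y' + s *\<^sub>R (y - y') = (1 - s) *\<^sub>R y' + s *\<^sub>R y"
      by (simp add: algebra_simps)
    then have "y' + s *\<^sub>R (y - y') \<in> {z\<in>\<Omega>. g z = 0}"
      using convexD_alt[OF convex_zero_set_nonneg[OF assms(2,3)], of y' y s] assms(7-10) that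
      by simp
    moreover have "e \<bullet> (s *\<^sub>R (y - y')) = s * H"
      by (simp add: H_def)
    ultimately show ?thesis
      using that assms(12) \<open>0 < H\<close> by (simp add: Z_def w_eq)
  qed
  moreover have "\<forall>z\<in>Z. - (\<epsilon> * (H + \<gamma>)) \<le> w z"
  proof
    fix z
    assume "z \<in> Z"
    then have "\<epsilon> * (e \<bullet> (z - y')) \<le> \<epsilon> * (H + \<gamma>)" "0 \<le> g z"
      using Z_cap(2) assms(3,12) by (auto simp: Z_def intro!: mult_left_mono less_imp_le)
    then show "- (\<epsilon> * (H + \<gamma>)) \<le> w z"
      by (simp add: w_eq)
  qed
  ultimately have "real N * (- w y / 6) ^ DIM('a) \<le> (4 * (\<epsilon> * (H + \<gamma>))) ^ DIM('a) / lam\<^sup>2"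
    using section_height_bound[of y' y e \<gamma> N] Z_cap(2) assms(14) \<open>0 < H\<close> by (simp add: H_def)
  moreover have "- w y / 6 = \<epsilon> * H / 6"
    using assms(8) by (simp add: w_eq H_def)
  ultimately show ?thesis
    by (simp only: H_def)
qed

lemma flat_cap_count_bound:
  fixes g :: "'a::euclidean_space \<Rightarrow> real"
  assumes "open \<Omega>" "convex_on \<Omega> g" "\<forall>z\<in>\<Omega>. 0 \<le> g z" "0 < lam"
    and MA: "\<And>E. E \<in> sets borel \<Longrightarrow> E \<subseteq> \<Omega> \<Longrightarrow>
           ennreal lam * emeasure lebesgue E \<le> MA_measure \<Omega> g E
         \<and> MA_measure \<Omega> g E \<le> ennreal (1 / lam) * emeasure lebesgue E"
    and "cball c r \<subseteq> \<Omega>"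
    and "y \<in> \<Omega>" "g y = 0" "y' \<in> \<Omega>" "g y' = 0" "e \<bullet> y' < e \<bullet> y"
    and cap: "\<forall>z\<in>\<Omega>. g z = 0 \<and> e \<bullet> y' \<le> e \<bullet> z \<longrightarrow> z \<in> ball c r \<and> e \<bullet> z \<le> e \<bullet> y"
    and "1 \<le> N"
  shows "real N \<le> 48 ^ DIM('a) / lam\<^sup>2"
proof -
  define H where "H = e \<bullet> (y - y')"
  define \<gamma> where "\<gamma> = 3 * H / (8 * real N)"
  have "0 < H"
    using assms(11) by (simp add: H_def inner_diff_right)
  have "0 < \<gamma>"
    using \<open>0 < H\<close> assms(13) by (simp add: \<gamma>_def)
  have "H * (3 / (8 * real N)) \<le> H * 1"
    using \<open>0 < H\<close> assms(13) by (intro mult_left_mono) auto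
  then have "\<gamma> \<le> H"
    by (simp add: \<gamma>_def)
  have "8 * real (N - 1) * \<gamma> < 3 * H"
    using assms(13) \<open>0 < H\<close> by (simp add: \<gamma>_def of_nat_diff field_simps)
  obtain \<epsilon> where "0 < \<epsilon>"
    "\<forall>z\<in>\<Omega>. g z < \<epsilon> * (e \<bullet> z - e \<bullet> y') \<longrightarrow> z \<in> ball c r \<and> e \<bullet> z < e \<bullet> y + \<gamma>"
    using tilted_section_localized[OF assms(1-3,6-8,11) cap \<open>0 < \<gamma>\<close>] by blast
  then have "real N * (\<epsilon> * H / 6) ^ DIM('a) \<le> (4 * (\<epsilon> * (H + \<gamma>))) ^ DIM('a) / lam\<^sup>2"
    using \<open>8 * real (N - 1) * \<gamma> < 3 * H\<close> unfolding H_def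
    by (intro tilted_section_stacking_bound[OF assms(1-4) MA assms(6-11)]) (auto simp: inner_diff_right)
  then show ?thesis
    using \<open>0 < \<epsilon>\<close> \<open>0 < H\<close> \<open>0 < \<gamma>\<close> \<open>\<gamma> \<le> H\<close>
    by (intro count_bound_from_stacking[of "\<epsilon> * H / 6" "\<epsilon> * (H + \<gamma>)"]) auto
qed

lemma extreme_point_flat_cap:
  fixes W :: "'a::euclidean_space set"
  assumes "convex W" "z0 extreme_point_of W" "b \<in> W" "0 < r" "r \<le> dist z0 b"
    and "compact (W \<inter> cball z0 r)"
  obtains e y y' where "y \<in> W" "y' \<in> W" "e \<bullet> y' < e \<bullet> y"
    "\<forall>z\<in>W. e \<bullet> y' \<le> e \<bullet> z \<longrightarrow> z \<in> ball z0 r \<and> e \<bullet> z \<le> e \<bullet> y"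
proof -
  have "W \<inter> sphere z0 r = (W \<inter> cball z0 r) \<inter> sphere z0 r"
    by auto
  then have "compact (W \<inter> sphere z0 r)"
    using compact_Int_closed[OF assms(6) closed_sphere] by simp
  then obtain e \<alpha> where cap: "\<alpha> < e \<bullet> z0" "\<forall>z\<in>W. \<alpha> \<le> e \<bullet> z \<longrightarrow> z \<in> ball z0 r"
    using extreme_point_cap[OF assms(1,2,4)] by blast
  define C where "C = W \<inter> cball z0 r \<inter> {z. \<alpha> \<le> e \<bullet> z}"
  have "compact C"
    unfolding C_def using compact_Int_closed[OF assms(6) closed_halfspace_ge] .
  moreover have "z0 \<in> C"
    using assms(2,4) cap(1) by (auto simp: C_def extreme_point_of_def)
  ultimately obtain y where y: "y \<in> C" "\<forall>z\<in>C. e \<bullet> z \<le> e \<bullet> y"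
    using continuous_attains_sup[of C "\<lambda>z. e \<bullet> z"] continuous_on_inner[OF continuous_on_const continuous_on_id]
    by blast
  have levels: "e \<bullet> b < \<alpha>" "\<alpha> < e \<bullet> y"
    using cap assms(3,5) y \<open>z0 \<in> C\<close> by (force simp: not_le)+
  define t where "t = (e \<bullet> y - \<alpha>) / (e \<bullet> y - e \<bullet> b)"
  have t: "0 \<le> t" "t \<le> 1"
    using levels by (auto simp: t_def divide_le_eq)
  define y' where "y' = (1 - t) *\<^sub>R y + t *\<^sub>R b"
  have "y' \<in> W"
    using convexD_alt[OF assms(1)] y(1) assms(3) t by (simp add: y'_def C_def)
  moreover have "e \<bullet> y' = \<alpha>"
  proof -
    have "e \<bullet> y' = e \<bullet> y - t * (e \<bullet> y - e \<bullet> b)"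
      by (simp add: y'_def inner_simps algebra_simps)
    then show ?thesis
      using levels by (simp add: t_def)
  qed
  moreover have "\<forall>z\<in>W. \<alpha> \<le> e \<bullet> z \<longrightarrow> z \<in> ball z0 r \<and> e \<bullet> z \<le> e \<bullet> y"
    using cap(2) y(2) by (auto simp: C_def)
  ultimately show ?thesis
    using y(1) levels by (intro that[of y y' e]) (auto simp: C_def)
qed

lemma extreme_point_zero_set_flat_cap:
  fixes g :: "'a::euclidean_space \<Rightarrow> real"
  assumes "open \<Omega>" "convex_on \<Omega> g" "\<forall>z\<in>\<Omega>. 0 \<le> g z"
    and "z0 \<in> \<Omega>" "z0 extreme_point_of {z\<in>\<Omega>. g z = 0}" "b \<in> \<Omega>" "g b = 0" "b \<noteq> z0"
  obtains c r e y y' where "cball c r \<subseteq> \<Omega>" "y \<in> \<Omega>" "g y = 0" "y' \<in> \<Omega>" "g y' = 0"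
    "e \<bullet> y' < e \<bullet> y" "\<forall>z\<in>\<Omega>. g z = 0 \<and> e \<bullet> y' \<le> e \<bullet> z \<longrightarrow> z \<in> ball c r \<and> e \<bullet> z \<le> e \<bullet> y"
proof -
  define W where "W = {z\<in>\<Omega>. g z = 0}"
  obtain r0 where r0: "0 < r0" "cball z0 r0 \<subseteq> \<Omega>"
    using assms(1,4) open_contains_cball by blast
  define r where "r = min r0 (dist z0 b)"
  have r: "0 < r" "cball z0 r \<subseteq> \<Omega>" "r \<le> dist z0 b"
    using r0 assms(8) by (auto simp: r_def)
  have "W \<inter> cball z0 r = {z \<in> cball z0 r. g z = 0}"
    using r(2) by (auto simp: W_def)
  moreover have "closed {z \<in> cball z0 r. g z = 0}"
    using continuous_on_subset[OF convex_on_continuous[OF assms(1,2)] r(2)]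
    by (intro continuous_closed_preimage_constant) auto
  moreover have "bounded {z \<in> cball z0 r. g z = 0}"
    by (rule bounded_subset[OF bounded_cball]) auto
  ultimately have "compact (W \<inter> cball z0 r)"
    by (simp add: compact_eq_bounded_closed)
  moreover have "convex W"
    unfolding W_def by (rule convex_zero_set_nonneg[OF assms(2,3)])
  ultimately obtain e y y' where "y \<in> W" "y' \<in> W" "e \<bullet> y' < e \<bullet> y"
    "\<forall>z\<in>W. e \<bullet> y' \<le> e \<bullet> z \<longrightarrow> z \<in> ball z0 r \<and> e \<bullet> z \<le> e \<bullet> y"
    using assms(6,7) by (auto simp: W_def intro: extreme_point_flat_cap[OF _ assms(5)[folded W_def] _ r(1,3)])
  then show ?thesis
    by (intro that[OF r(2)]) (auto simp: W_def)
qed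

theorem proposition3p11:
  fixes \<Omega> :: "'a::euclidean_space set" and u :: "'a \<Rightarrow> real"
    and lam :: real and x p :: 'a and W :: "'a set"
  assumes "open \<Omega>" and "convex \<Omega>"
    and "convex_on \<Omega> u"
    and "lam > 0"
    and "\<And>E. E \<in> sets borel \<Longrightarrow> E \<subseteq> \<Omega> \<Longrightarrow>
           ennreal lam * emeasure lebesgue E \<le> MA_measure \<Omega> u E
         \<and> MA_measure \<Omega> u E \<le> ennreal (1 / lam) * emeasure lebesgue E"
    and "x \<in> \<Omega>" and "p \<in> subdiff \<Omega> u x"
    and "W = {z\<in>\<Omega>. u z = u x + p \<bullet> (z - x)}"
    and "\<exists>a\<in>W. \<exists>b\<in>W. a \<noteq> b"
  shows "\<not> (\<exists>z\<in>\<Omega>. z extreme_point_of W)"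
proof
  assume "\<exists>z\<in>\<Omega>. z extreme_point_of W"
  then obtain z0 where z0: "z0 \<in> \<Omega>" "z0 extreme_point_of W"
    by blast
  obtain b where b: "b \<in> W" "b \<noteq> z0"
    using assms(9) by blast
  define g where "g z = u z + (- u x + p \<bullet> x) + (- p) \<bullet> z" for z
  have W_eq: "W = {z\<in>\<Omega>. g z = 0}"
    using assms(8) by (auto simp: g_def inner_simps algebra_simps)
  have g_nonneg: "\<forall>z\<in>\<Omega>. 0 \<le> g z"
    using assms(7) by (auto simp: subdiff_def g_def inner_simps algebra_simps)
  have g_convex: "convex_on \<Omega> g"
    unfolding g_def[abs_def] by (rule convex_on_add_affine[OF assms(3)])
  have MA_g: "ennreal lam * emeasure lebesgue E \<le> MA_measure \<Omega> g E
      \<and> MA_measure \<Omega> g E \<le> ennreal (1 / lam) * emeasure lebesgue E"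
    if "E \<in> sets borel" "E \<subseteq> \<Omega>" for E
    unfolding g_def[abs_def] MA_measure_add_affine using assms(5)[OF that] .
  have "z0 extreme_point_of {z\<in>\<Omega>. g z = 0}" "b \<in> \<Omega>" "g b = 0"
    using z0(2) b(1) by (simp_all add: W_eq)
  then obtain c r e y y' where cap: "cball c r \<subseteq> \<Omega>" "y \<in> \<Omega>" "g y = 0" "y' \<in> \<Omega>" "g y' = 0"
    "e \<bullet> y' < e \<bullet> y" "\<forall>z\<in>\<Omega>. g z = 0 \<and> e \<bullet> y' \<le> e \<bullet> z \<longrightarrow> z \<in> ball c r \<and> e \<bullet> z \<le> e \<bullet> y"
    by (rule extreme_point_zero_set_flat_cap[OF assms(1) g_convex g_nonneg z0(1) _ _ _ b(2)])
  have "real N \<le> 48 ^ DIM('a) / lam\<^sup>2" if "1 \<le> N" for N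
    by (rule flat_cap_count_bound[OF assms(1) g_convex g_nonneg assms(4) MA_g cap that])
  from this[of "nat \<lceil>48 ^ DIM('a) / lam\<^sup>2\<rceil> + 1"] show False
    by linarith
qed

end
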